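(* Let $k$ be a positive integer such that $k+1$ is an odd prime, and let $p>k(k+1)$ be an odd prime. Then every $\mathbf u\in\pi_{(k+1)p\to p}^{-1}\big((1,2,\ldots,k)\big)\subseteq\mathbb{Z}_{p,k+1}^k$ is $(k,p,k+1)$-proper. In particular, $(1,2,\ldots,k)\in\mathbb{Z}_{p,1}^k$ is eventually $(k,p)$-proper.
   Context: For $x\in\mathbb{R}$, $\lVert x\rVert$ is the distance from $x$ to the nearest integer. $\mathbb{Z}_n$ denotes integers modulo $n$; $\mathbb{Z}_{p,l}:=\mathbb{Z}_{pl}\setminus p\mathbb{Z}_l$ (residues mod $pl$ not divisible by $p$); $\pi_{m\to n}$ is the natural projection $\mathbb{Z}_m\to\mathbb{Z}_n$ for $n\mid m$, coordinatewise on tuples. A tuple $\mathbf v\in\mathbb{Z}_{p,l}^k$ is $(k,p,l)$-proper if either there is an index $i$ with $\gcd(l,v_1,\ldots,v_{i-1},v_{i+1},\ldots,v_k)>1$, or there is $t\in\frac1{lp}\mathbb{Z}$ with $\lVert tv_j\rVert\ge\frac1{k+1}$ for all $j$; otherwise it is $(k,p,l)$-improper, and $I(k,p,l)$ is the set of improper tuples. $\mathbf v\in\mathbb{Z}_{p,1}^k$ is eventually $(k,p)$-proper if $\mathbf v\notin\pi_{lp\to p}I(k,p,l)$ for some positive integer $l$. *)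

theory Defs
  imports Complex_Main "HOL-Computational_Algebra.Primes"
begin

definition dist_int :: "real \<Rightarrow> real" where
  "dist_int x = \<bar>x - of_int (round x)\<bar>"

text \<open>Z_{p,l}: residues mod p*l (represented by 0..p*l-1) not divisible by p.\<close>
definition Zpl :: "nat \<Rightarrow> nat \<Rightarrow> int set" where
  "Zpl p l = {x. 0 \<le> x \<and> x < int (p * l) \<and> \<not> int p dvd x}"

text \<open>k-tuples over Z_{p,l}, as lists of length k (index j = 0..k-1 corresponds to v_{j+1}).\<close>
definition tuples :: "nat \<Rightarrow> nat \<Rightarrow> nat \<Rightarrow> int list set" where
  "tuples k p l = {v. length v = k \<and> set v \<subseteq> Zpl p l}"

definition proj :: "nat \<Rightarrow> int list \<Rightarrow> int list" where
  "proj n v = map (\<lambda>x. x mod int n) v"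

definition proper :: "nat \<Rightarrow> nat \<Rightarrow> nat \<Rightarrow> int list \<Rightarrow> bool" where
  "proper k p l v \<longleftrightarrow>
     (\<exists>i<k. Gcd (insert (int l) {v ! j | j. j < k \<and> j \<noteq> i}) > 1) \<or>
     (\<exists>m::int. \<forall>j<k. dist_int (real_of_int m / real (l * p) * real_of_int (v ! j))
                        \<ge> 1 / real (k + 1))"

definition improper_set :: "nat \<Rightarrow> nat \<Rightarrow> nat \<Rightarrow> int list set" where
  "improper_set k p l = {v \<in> tuples k p l. \<not> proper k p l v}"

definition eventually_proper :: "nat \<Rightarrow> nat \<Rightarrow> int list \<Rightarrow> bool" where
  "eventually_proper k p v \<longleftrightarrow> v \<in> tuples k p 1 \<and>
     (\<exists>l>0. v \<notin> proj p ` improper_set k p l)"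

end

theory Submission
  imports Defs "HOL-Number_Theory.Number_Theory" "HOL-Computational_Algebra.Polynomial"
begin

text \<open>
  Put q = k + 1 and N = q p. Since u_j = j + 1 (mod p), it suffices to find m with
  p \<le> m u_j mod N \<le> N - p for all j, i.e. with m u_j / N at distance at least 1/q from
  the integers. If q divides no u_j, m = p works; if q divides every u_j, the gcd clause
  of properness applies. Otherwise choose s, c such that s u_j + c (j + 1) is congruent
  to neither 0 nor -1 modulo q for any j; then m = p s + q t works for a suitable t,
  because m u_j is congruent modulo N to p w_j + e (j + 1) with 1 \<le> w_j \<le> q - 2,
  1 \<le> e \<le> q, and q k \<le> p.

  Such s, c exist by a counting argument modulo q. If there were none, then for every
  residue mu outside the set R of ratios u_y / y the map y \<mapsto> u_y - mu y would hit every
  nonzero residue exactly once, so the degree q - 1 polynomial P(mu) = prod_y (u_y - mu y)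
  takes the value (q - 1)! there and 0 on R. Summing P over all residues gives the negated
  leading coefficient, which is -(q - 1)! because q is odd; hence the number of residues
  outside R is -1 modulo q. This is impossible, since R contains 0 (some u_y is divisible
  by q) and a nonzero ratio (some u_y is not).
\<close>

lemma prime_dvd_sum_powers:
  fixes q i :: nat
  assumes "prime q" "i < q - 1"
  shows "int q dvd (\<Sum>\<mu><q. int \<mu> ^ i)"
proof (cases "i = 0")
  case True
  then show ?thesis by simp
next
  case False
  have q1: "q > 1" using assms prime_gt_1_nat by auto
  obtain g where "residue_primroot q g"
    using prime_primitive_root_exists[OF q1 assms(1)] by blast
  then have cop: "coprime q g" and ord: "ord q g = q - 1"
    using assms by (auto simp: residue_primroot_def totient_prime)
  have not_one: "\<not> [g ^ i = 1] (mod q)"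
    using ord_minimal[of i q g] False assms ord by auto
  define S where "S = (\<Sum>\<mu><q. \<mu> ^ i)"
  have inj: "inj_on (\<lambda>\<mu>. g * \<mu> mod q) {..<q}"
  proof (rule inj_onI)
    fix x y assume "x \<in> {..<q}" "y \<in> {..<q}" "g * x mod q = g * y mod q"
    then show "x = y"
      using cop cong_mult_lcancel_nat[of g q x y] by (simp add: cong_def coprime_commute)
  qed
  have perm: "(\<lambda>\<mu>. g * \<mu> mod q) ` {..<q} = {..<q}"
    by (rule endo_inj_surj) (use q1 inj in auto)
  have "S = (\<Sum>\<mu><q. (g * \<mu> mod q) ^ i)"
    unfolding S_def by (subst (1) perm[symmetric]) (simp add: sum.reindex[OF inj])
  also have "[\<dots> = (\<Sum>\<mu><q. (g * \<mu>) ^ i)] (mod q)"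
    by (intro cong_sum cong_pow) (simp add: cong_def)
  also have "(\<Sum>\<mu><q. (g * \<mu>) ^ i) = S * g ^ i"
    unfolding S_def sum_distrib_right by (simp add: power_mult_distrib mult.commute)
  finally have "[S * 1 = S * g ^ i] (mod q)" by simp
  then have "q dvd S"
    using not_one cong_mult_lcancel_nat[of S q 1 "g ^ i"] prime_imp_coprime[OF assms(1), of S]
    by (auto simp: coprime_commute cong_sym_eq)
  then have "int q dvd int S" by simp
  then show ?thesis by (simp add: S_def)
qed

lemma prime_dvd_sum_powers_pred_plus_one:
  fixes q :: nat
  assumes "prime q"
  shows "int q dvd (\<Sum>\<mu><q. int \<mu> ^ (q - 1)) + 1"
proof -
  have q1: "q > 1" using assms prime_gt_1_nat by auto
  have "{..<q} = insert 0 {1..<q}" using q1 by auto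
  then have "(\<Sum>\<mu><q. int \<mu> ^ (q - 1)) = (\<Sum>\<mu>\<in>{1..<q}. int \<mu> ^ (q - 1))"
    using q1 by simp
  also have "[\<dots> = (\<Sum>\<mu>\<in>{1..<q}. 1)] (mod int q)"
  proof (rule cong_sum)
    fix \<mu> assume "\<mu> \<in> {1..<q}"
    then have "\<not> q dvd \<mu>" by (auto dest: dvd_imp_le)
    then have "[\<mu> ^ (q - 1) = 1] (mod q)" using fermat_theorem assms by blast
    then show "[int \<mu> ^ (q - 1) = 1] (mod int q)" by (metis cong_int_iff of_nat_1 of_nat_power)
  qed
  finally have "[(\<Sum>\<mu><q. int \<mu> ^ (q - 1)) + 1 = (\<Sum>\<mu>\<in>{1..<q}. 1) + 1] (mod int q)"
    by (rule cong_add) simp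
  also have "(\<Sum>\<mu>\<in>{1..<q}. 1::int) + 1 = int q"
    using q1 by simp
  finally show ?thesis by (simp add: cong_def dvd_eq_mod_eq_0)
qed

lemma prime_dvd_sum_poly:
  fixes P :: "int poly" and q :: nat
  assumes "prime q" "degree P \<le> q - 1"
  shows "int q dvd (\<Sum>\<mu><q. poly P (int \<mu>)) + coeff P (q - 1)"
proof -
  have "poly P x = (\<Sum>i\<le>q - 1. coeff P i * x ^ i)" for x
    unfolding poly_altdef using assms(2)
    by (intro sum.mono_neutral_left) (auto simp: coeff_eq_0)
  then have "(\<Sum>\<mu><q. poly P (int \<mu>)) = (\<Sum>\<mu><q. \<Sum>i\<le>q - 1. coeff P i * int \<mu> ^ i)"
    by simp
  also have "\<dots> = (\<Sum>i\<le>q - 1. coeff P i * (\<Sum>\<mu><q. int \<mu> ^ i))"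
    by (subst sum.swap) (simp add: sum_distrib_left)
  also have "{..q - 1} = insert (q - 1) {..<q - 1}" by auto
  finally have sum: "(\<Sum>\<mu><q. poly P (int \<mu>)) + coeff P (q - 1) =
      coeff P (q - 1) * ((\<Sum>\<mu><q. int \<mu> ^ (q - 1)) + 1)
      + (\<Sum>i<q - 1. coeff P i * (\<Sum>\<mu><q. int \<mu> ^ i))"
    by (simp add: algebra_simps)
  show ?thesis
    unfolding sum using assms(1)
    by (intro dvd_add dvd_mult dvd_sum prime_dvd_sum_powers prime_dvd_sum_powers_pred_plus_one) auto
qed

lemma prime_dvd_sum_prod_linear:
  fixes a b :: "'a \<Rightarrow> int"
  assumes "prime q" "finite Y" "card Y = q - 1" "\<forall>y\<in>Y. b y \<noteq> 0"
  shows "int q dvd (\<Sum>\<mu><q. \<Prod>y\<in>Y. a y + int \<mu> * b y) + (\<Prod>y\<in>Y. b y)"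
proof -
  define P where "P = (\<Prod>y\<in>Y. [:a y, b y:])"
  have "degree P = q - 1"
    unfolding P_def using assms by (subst degree_prod_eq_sum_degree) auto
  moreover have "lead_coeff P = (\<Prod>y\<in>Y. b y)"
    unfolding P_def using assms(4) by (auto simp: lead_coeff_prod intro!: prod.cong)
  moreover have "poly P x = (\<Prod>y\<in>Y. a y + x * b y)" for x
    unfolding P_def by (simp add: poly_prod)
  ultimately show ?thesis
    using prime_dvd_sum_poly[OF assms(1), of P] by simp
qed

lemma prod_cong_prod_image_mod:
  fixes f :: "'a \<Rightarrow> int"
  assumes "finite Y" "(\<lambda>y. f y mod n) ` Y = B" "card Y = card B"
  shows "[(\<Prod>y\<in>Y. f y) = \<Prod>B] (mod n)"
proof -
  have "inj_on (\<lambda>y. f y mod n) Y"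
    using assms by (intro eq_card_imp_inj_on) auto
  then have "\<Prod>B = (\<Prod>y\<in>Y. f y mod n)"
    using assms(2) prod.reindex[of "\<lambda>y. f y mod n" Y id] by simp
  moreover have "[(\<Prod>y\<in>Y. f y) = (\<Prod>y\<in>Y. f y mod n)] (mod n)"
    by (intro cong_prod) (simp add: cong_def)
  ultimately show ?thesis by simp
qed

lemma prod_atLeastAtMost_int_eq_fact: "\<Prod>{1..int n} = fact n"
proof -
  have "{1..int n} = int ` {1..n}"
    by (simp add: image_int_atLeastAtMost)
  then have "\<Prod>{1..int n} = (\<Prod>i\<in>{1..n}. int i)"
    by (simp add: prod.reindex)
  then show ?thesis by (simp add: fact_prod)
qed

lemma prime_exists_residue_quotient:
  fixes a b :: int
  assumes "prime q" "\<not> int q dvd b"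
  shows "\<exists>\<mu><q. int q dvd a - int \<mu> * b"
proof -
  have "prime (int q)"
    using assms(1) by simp
  then have "coprime b (int q)"
    using assms(2) prime_imp_coprime[of "int q" b] by (simp add: coprime_commute)
  then obtain x where x: "[b * x = 1] (mod int q)"
    using cong_solve_coprime_int by blast
  define \<mu> where "\<mu> = nat ((a * x) mod int q)"
  have \<mu>: "int \<mu> = (a * x) mod int q"
    using assms(1) prime_gt_0_nat unfolding \<mu>_def by simp
  have "[int \<mu> * b = a * x * b] (mod int q)"
    unfolding \<mu> by (intro cong_scalar_right) (simp add: cong_def)
  also have "[a * x * b = a * 1] (mod int q)"
    using cong_scalar_left[OF x, of a] by (simp add: mult_ac)
  finally have "int q dvd a - int \<mu> * b"
    by (simp add: cong_iff_dvd_diff dvd_diff_commute)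
  moreover have "\<mu> < q"
    using assms(1) prime_gt_0_nat \<mu> by (simp add: \<mu>_def nat_less_iff)
  ultimately show ?thesis by blast
qed

lemma cong_zero_or_inverse_if_mult_mod_degenerate:
  fixes d x \<beta> n :: int
  assumes x: "[\<beta> * x = 1] (mod n)" and r: "(- x * d) mod n \<in> {0, n - 1}"
  shows "[d = 0] (mod n) \<or> [d = \<beta>] (mod n)"
proof -
  define r where "r = (- x * d) mod n"
  have "[\<beta> * (- x * d) = \<beta> * r] (mod n)"
    by (intro cong_scalar_left) (simp add: r_def cong_def)
  moreover have "[\<beta> * (- x * d) = - d] (mod n)"
    using cong_scalar_right[OF x, of "- d"] by (simp add: algebra_simps)
  ultimately have "[- d = \<beta> * r] (mod n)"
    using cong_sym cong_trans by metis
  then have d: "[d = - \<beta> * r] (mod n)"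
    by (metis cong_minus_minus_iff minus_minus mult_minus_left)
  have "[- \<beta> * (n - 1) = \<beta>] (mod n)"
    by (simp add: cong_iff_dvd_diff algebra_simps)
  then show ?thesis
    using d r cong_trans[OF d] by (auto simp: r_def)
qed

lemma residues_image_if_no_avoiding_form:
  fixes a :: "nat \<Rightarrow> int" and \<mu> :: int
  assumes q: "prime q"
    and no_form: "\<forall>s c. \<exists>y\<in>Y. (s * a y + c * int y) mod int q \<in> {0, int q - 1}"
    and nondvd: "\<forall>y\<in>Y. \<not> int q dvd a y - \<mu> * int y"
  shows "(\<lambda>y. (a y - \<mu> * int y) mod int q) ` Y = {1..int q - 1}"
proof
  have q1: "int q > 1" using q prime_gt_1_nat by auto
  show "(\<lambda>y. (a y - \<mu> * int y) mod int q) ` Y \<subseteq> {1..int q - 1}"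
  proof (rule image_subsetI)
    fix y assume "y \<in> Y"
    then have "(a y - \<mu> * int y) mod int q \<noteq> 0"
      using nondvd by (simp add: dvd_eq_mod_eq_0)
    moreover have "0 \<le> (a y - \<mu> * int y) mod int q" "(a y - \<mu> * int y) mod int q < int q"
      using q1 by simp_all
    ultimately show "(a y - \<mu> * int y) mod int q \<in> {1..int q - 1}"
      by simp
  qed
  show "{1..int q - 1} \<subseteq> (\<lambda>y. (a y - \<mu> * int y) mod int q) ` Y"
  proof
    fix \<beta> assume \<beta>: "\<beta> \<in> {1..int q - 1}"
    have "prime (int q)" using q by simp
    moreover have "\<not> int q dvd \<beta>" using \<beta> by (auto dest: zdvd_imp_le)
    ultimately have "coprime \<beta> (int q)"
      using prime_imp_coprime[of "int q" \<beta>] by (simp add: coprime_commute)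
    then obtain x where x: "[\<beta> * x = 1] (mod int q)"
      using cong_solve_coprime_int by blast
    obtain y where y: "y \<in> Y" and "(- x * a y + x * \<mu> * int y) mod int q \<in> {0, int q - 1}"
      using no_form[rule_format, of "- x" "x * \<mu>"] by (rule bexE)
    moreover have "- x * a y + x * \<mu> * int y = - x * (a y - \<mu> * int y)"
      by (simp add: algebra_simps)
    ultimately have "(- x * (a y - \<mu> * int y)) mod int q \<in> {0, int q - 1}"
      by simp
    then have "[a y - \<mu> * int y = 0] (mod int q) \<or> [a y - \<mu> * int y = \<beta>] (mod int q)"
      by (rule cong_zero_or_inverse_if_mult_mod_degenerate[OF x])
    then have "[a y - \<mu> * int y = \<beta>] (mod int q)"
      using nondvd y by (auto simp: cong_0_iff)
    then have "(a y - \<mu> * int y) mod int q = \<beta>"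
      using \<beta> by (simp add: cong_def)
    then show "\<beta> \<in> (\<lambda>y. (a y - \<mu> * int y) mod int q) ` Y"
      using y by blast
  qed
qed

lemma prod_cong_fact_if_no_avoiding_form:
  fixes a :: "nat \<Rightarrow> int" and \<mu> :: int
  assumes "prime q"
    and "\<forall>s c. \<exists>y\<in>{1..<q}. (s * a y + c * int y) mod int q \<in> {0, int q - 1}"
    and "\<forall>y\<in>{1..<q}. \<not> int q dvd a y - \<mu> * int y"
  shows "[(\<Prod>y\<in>{1..<q}. a y - \<mu> * int y) = fact (q - 1)] (mod int q)"
proof -
  have q1: "q > 1" using assms(1) prime_gt_1_nat by auto
  have "(\<lambda>y. (a y - \<mu> * int y) mod int q) ` {1..<q} = {1..int q - 1}"
    using assms by (rule residues_image_if_no_avoiding_form)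
  then have "[(\<Prod>y\<in>{1..<q}. a y - \<mu> * int y) = \<Prod>{1..int q - 1}] (mod int q)"
    using q1 by (intro prod_cong_prod_image_mod) auto
  also have "\<Prod>{1..int q - 1} = fact (q - 1)"
    using prod_atLeastAtMost_int_eq_fact[of "q - 1"] q1 by (simp add: of_nat_diff)
  finally show ?thesis .
qed

lemma prod_uminus_int_eq_fact:
  assumes "odd q"
  shows "(\<Prod>y\<in>{1..<q}. - int y) = fact (q - 1)"
proof -
  have "{1..<q} = {1..q - 1}"
    using assms by (cases q) auto
  then have "(\<Prod>y\<in>{1..<q}. - int y) = (-1) ^ (q - 1) * (\<Prod>y\<in>{1..q - 1}. int y)"
    by (simp add: prod_uminus)
  then show ?thesis
    using assms by (simp add: neg_one_even_power fact_prod)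
qed

definition ratio_residues :: "nat \<Rightarrow> (nat \<Rightarrow> int) \<Rightarrow> nat set" where
  "ratio_residues q a = {\<mu>. \<mu> < q \<and> (\<exists>y\<in>{1..<q}. int q dvd a y - int \<mu> * int y)}"

lemma two_le_card_ratio_residues:
  assumes q: "prime q"
    and y0: "y0 \<in> {1..<q}" "int q dvd a y0"
    and y1: "y1 \<in> {1..<q}" "\<not> int q dvd a y1"
  shows "2 \<le> card (ratio_residues q a)"
proof -
  have "\<not> int q dvd int y1"
    using y1(1) by (auto dest: dvd_imp_le)
  then obtain \<mu> where \<mu>: "\<mu> < q" "int q dvd a y1 - int \<mu> * int y1"
    using prime_exists_residue_quotient[OF q] by blast
  then have "{0, \<mu>} \<subseteq> ratio_residues q a"
    using y0 y1(1) unfolding ratio_residues_def by auto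
  moreover have "\<mu> \<noteq> 0"
    using \<mu>(2) y1(2) by (cases \<mu>) auto
  moreover have "finite (ratio_residues q a)"
    unfolding ratio_residues_def by simp
  ultimately show ?thesis
    using card_mono[of "ratio_residues q a" "{0, \<mu>}"] by simp
qed

lemma not_dvd_card_non_ratio_residues_plus_one:
  assumes "prime q"
    and "y0 \<in> {1..<q}" "int q dvd a y0"
    and "y1 \<in> {1..<q}" "\<not> int q dvd a y1"
  shows "\<not> int q dvd int (card ({..<q} - ratio_residues q a)) + 1"
proof -
  let ?R = "ratio_residues q a"
  have R_sub: "?R \<subseteq> {..<q}"
    unfolding ratio_residues_def by auto
  then have "card ({..<q} - ?R) = q - card ?R" "card ?R \<le> q"
    using card_mono[OF _ R_sub] by (simp_all add: card_Diff_subset finite_subset)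
  moreover have "2 \<le> card ?R"
    using two_le_card_ratio_residues assms by blast
  ultimately show ?thesis
    by (auto dest: zdvd_imp_le)
qed

lemma exists_avoiding_linear_form:
  fixes q :: nat and a :: "nat \<Rightarrow> int"
  assumes q: "prime q" "odd q"
    and y0: "y0 \<in> {1..<q}" "int q dvd a y0"
    and y1: "y1 \<in> {1..<q}" "\<not> int q dvd a y1"
  shows "\<exists>s c. \<forall>y\<in>{1..<q}. (s * a y + c * int y) mod int q \<notin> {0, int q - 1}"
proof (rule ccontr)
  let ?Y = "{1..<q}"
  let ?P = "\<lambda>\<mu>. \<Prod>y\<in>?Y. a y + int \<mu> * - int y"
  define R where "R = ratio_residues q a"
  define F where "F = (fact (q - 1) :: int)"
  assume "\<not> ?thesis"
  then have no_form: "\<forall>s c. \<exists>y\<in>?Y. (s * a y + c * int y) mod int q \<in> {0, int q - 1}"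
    by (simp only: not_ex ball_simps(10) not_not simp_thms)
  have q1: "q > 1" using q prime_gt_1_nat by auto
  have "[?P \<mu> = (if \<mu> \<in> R then 0 else F)] (mod int q)" if "\<mu> < q" for \<mu>
  proof (cases "\<mu> \<in> R")
    case True
    then obtain y where y: "y \<in> ?Y" and "int q dvd a y - int \<mu> * int y"
      unfolding R_def ratio_residues_def by blast
    then have "int q dvd a y + int \<mu> * - int y"
      by simp
    also have "\<dots> dvd ?P \<mu>"
      using y by (intro dvd_prodI) auto
    finally show ?thesis
      using True by (simp add: cong_0_iff)
  next
    case False
    then show ?thesis
      using prod_cong_fact_if_no_avoiding_form[OF q(1) no_form, of "int \<mu>"] that
      by (simp add: R_def ratio_residues_def F_def)
  qed
  then have "[(\<Sum>\<mu><q. ?P \<mu>) = (\<Sum>\<mu><q. if \<mu> \<in> R then 0 else F)] (mod int q)"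
    by (intro cong_sum) simp
  also have "(\<Sum>\<mu><q. if \<mu> \<in> R then 0 else F) = int (card ({..<q} - R)) * F"
    by (simp add: sum.If_cases Diff_eq)
  finally have sum_mod: "[(\<Sum>\<mu><q. ?P \<mu>) = int (card ({..<q} - R)) * F] (mod int q)" .
  have "int q dvd (\<Sum>\<mu><q. ?P \<mu>) + F"
    using prime_dvd_sum_prod_linear[OF q(1), where Y = ?Y and a = a and b = "\<lambda>y. - int y"] q1
    unfolding prod_uminus_int_eq_fact[OF q(2)] F_def by simp
  then have "int q dvd (int (card ({..<q} - R)) + 1) * F"
    using cong_dvd_iff[OF cong_add[OF sum_mod cong_refl]] by (simp add: distrib_right)
  moreover have "\<not> int q dvd F"
  proof -
    have "\<not> q dvd fact (q - 1)"
      using prime_dvd_fact_iff[OF q(1)] q1 by simp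
    then show ?thesis
      unfolding F_def by (metis int_dvd_int_iff of_nat_fact)
  qed
  ultimately have "int q dvd int (card ({..<q} - R)) + 1"
    using q(1) by (simp add: prime_dvd_mult_iff)
  then show False
    unfolding R_def using not_dvd_card_non_ratio_residues_plus_one[OF q(1) y0 y1] by blast
qed

lemma dist_int_div_ge:
  fixes M N r :: int
  assumes "0 < N" "r \<le> M mod N" "M mod N \<le> N - r"
  shows "real_of_int r / real_of_int N \<le> dist_int (real_of_int M / real_of_int N)"
proof -
  define n where "n = round (real_of_int M / real_of_int N)"
  have M: "M = M div N * N + M mod N" by simp
  have "r \<le> \<bar>M - n * N\<bar>"
  proof (cases "n \<le> M div N")
    case True
    then have "n * N \<le> M div N * N" using assms(1) by (simp add: mult_right_mono)
    then have "r \<le> M - n * N" using M assms(2) by linarith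
    then show ?thesis by simp
  next
    case False
    then have "(M div N + 1) * N \<le> n * N" using assms(1) by (simp add: mult_right_mono)
    then have "M div N * N + N \<le> n * N" by (simp add: algebra_simps)
    then have "r \<le> n * N - M" using M assms(3) by linarith
    then show ?thesis by simp
  qed
  then have "real_of_int r \<le> \<bar>real_of_int M - real_of_int n * real_of_int N\<bar>"
    by (metis of_int_abs of_int_diff of_int_le_iff of_int_mult)
  also have "\<dots> = \<bar>real_of_int M / real_of_int N - real_of_int n\<bar> * real_of_int N"
    using assms(1) by (simp add: abs_mult[symmetric] field_simps)
  finally show ?thesis
    using assms(1) unfolding dist_int_def n_def by (simp add: field_simps)
qed

lemma proper_if_mod_bounds:
  fixes m :: int
  assumes "0 < p" "0 < l" "l \<le> k + 1"
    and bounds: "\<forall>j<k. int p \<le> (m * v ! j) mod (int l * int p)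
                        \<and> (m * v ! j) mod (int l * int p) \<le> int l * int p - int p"
  shows "proper k p l v"
proof -
  have "1 / real (k + 1) \<le> dist_int (real_of_int m / real (l * p) * real_of_int (v ! j))"
    if "j < k" for j
  proof -
    have "1 / real (k + 1) \<le> 1 / real l"
      using assms(2,3) by (simp add: frac_le)
    also have "\<dots> = real_of_int (int p) / real_of_int (int l * int p)"
      using assms(1) by simp
    also have "\<dots> \<le> dist_int (real_of_int (m * v ! j) / real_of_int (int l * int p))"
      using assms(1,2) bounds that by (intro dist_int_div_ge) auto
    also have "real_of_int (m * v ! j) / real_of_int (int l * int p)
        = real_of_int m / real (l * p) * real_of_int (v ! j)"
      by simp
    finally show ?thesis .
  qed
  then show ?thesis
    unfolding proper_def by blast
qed

lemma proper_if_all_dvd: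
  assumes "0 < k" "1 < l" "\<forall>j<k. int l dvd v ! j"
  shows "proper k p l v"
proof -
  define G where "G = Gcd (insert (int l) {v ! j | j. j < k \<and> j \<noteq> 0})"
  have "int l dvd G"
    unfolding G_def using assms(3) by (auto intro!: Gcd_greatest)
  moreover have "G \<noteq> 0" "0 \<le> G"
    using assms(2) unfolding G_def by (simp_all add: Gcd_0_iff)
  ultimately have "1 < G"
    using assms(2) by (auto dest: zdvd_imp_le)
  then show ?thesis
    unfolding proper_def G_def using assms(1) by blast
qed

lemma mult_mod_bounds_if_not_dvd:
  fixes p l x :: int
  assumes "0 < p" "0 < l" "\<not> l dvd x"
  shows "p \<le> (p * x) mod (l * p) \<and> (p * x) mod (l * p) \<le> l * p - p"
proof -
  have "(p * x) mod (l * p) = p * (x mod l)"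
    by (simp add: mult.commute mod_mult_mult1)
  moreover have "x mod l \<noteq> 0" "0 \<le> x mod l" "x mod l < l"
    using assms(2,3) by (simp_all add: dvd_eq_mod_eq_0)
  then have "p * 1 \<le> p * (x mod l)" "p * (x mod l) \<le> p * (l - 1)"
    using assms(1) by (intro mult_left_mono; simp)+
  ultimately show ?thesis
    by (simp add: algebra_simps)
qed

lemma mult_cong_form_residue:
  fixes p q s c t v y :: int
  assumes "[v = y] (mod p)"
  shows "[(p * s + q * t) * v = p * ((s * v + c * y) mod q) + (t * q - c mod q * p) * y] (mod q * p)"
proof -
  define w where "w = (s * v + c * y) mod q"
  obtain \<alpha> where \<alpha>: "v = y + p * \<alpha>"
    using assms by (metis cong_iff_dvd_diff dvd_def add_diff_cancel_left' diff_add_cancel cong_sym)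
  obtain \<beta> where "s * v + c * y = w + q * \<beta>"
    unfolding w_def by (metis mod_div_mult_eq add.commute mult.commute)
  then have w: "w = s * v + c * y - q * \<beta>"
    by simp
  define c' where "c' = c mod q"
  obtain \<gamma> where \<gamma>: "c = c' + q * \<gamma>"
    unfolding c'_def by (metis mod_div_mult_eq add.commute mult.commute)
  have "(p * s + q * t) * v - (p * w + (t * q - c' * p) * y) = q * p * (\<beta> + t * \<alpha> - \<gamma> * y)"
    by (simp add: w \<alpha> \<gamma> algebra_simps)
  then show ?thesis
    unfolding w_def c'_def by (simp add: cong_iff_dvd_diff)
qed

lemma exists_multiplier_mod_bounds:
  fixes p q s c :: int and v y :: "'a \<Rightarrow> int"
  assumes "1 < q" "0 < p"
    and cong: "\<forall>j\<in>J. [v j = y j] (mod p)"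
    and small: "\<forall>j\<in>J. 0 \<le> y j \<and> q * y j \<le> p"
    and form: "\<forall>j\<in>J. (s * v j + c * y j) mod q \<notin> {0, q - 1}"
  shows "\<exists>m. \<forall>j\<in>J. p \<le> (m * v j) mod (q * p) \<and> (m * v j) mod (q * p) \<le> q * p - p"
proof -
  define t where "t = c mod q * p div q + 1"
  define e where "e = t * q - c mod q * p"
  have e: "1 \<le> e" "e \<le> q"
  proof -
    have "e = q - c mod q * p mod q"
      unfolding e_def t_def using div_mult_mod_eq[of "c mod q * p" q] by (simp add: algebra_simps)
    moreover have "0 \<le> c mod q * p mod q" "c mod q * p mod q < q"
      using assms(1) by simp_all
    ultimately show "1 \<le> e" "e \<le> q" by auto
  qed
  have "p \<le> ((p * s + q * t) * v j) mod (q * p) \<and> ((p * s + q * t) * v j) mod (q * p) \<le> q * p - p"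
    if j: "j \<in> J" for j
  proof -
    define w where "w = (s * v j + c * y j) mod q"
    have "w \<noteq> 0" "w \<noteq> q - 1" "0 \<le> w" "w < q"
      using form j assms(1) by (auto simp: w_def)
    then have "p * 1 \<le> p * w" "p * w \<le> p * (q - 2)"
      using assms(2) by (intro mult_left_mono; simp)+
    moreover have "0 \<le> e * y j" "e * y j \<le> q * y j" "q * y j \<le> p"
      using e small j by (simp_all add: mult_right_mono)
    moreover have "[(p * s + q * t) * v j = p * w + e * y j] (mod q * p)"
      unfolding w_def e_def using cong j by (intro mult_cong_form_residue) auto
    ultimately have "p \<le> p * w + e * y j" "p * w + e * y j \<le> q * p - p"
      and "((p * s + q * t) * v j) mod (q * p) = (p * w + e * y j) mod (q * p)"
      by (simp_all add: cong_def algebra_simps)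
    moreover have "(p * w + e * y j) mod (q * p) = p * w + e * y j"
      using calculation assms(2) by (intro mod_pos_pos_trivial) auto
    ultimately show ?thesis by simp
  qed
  then show ?thesis by blast
qed

lemma nth_cong_if_proj_eq_upt:
  fixes u :: "int list"
  assumes proj_u: "proj p u = map int [1..<k + 1]" and "k < p"
  shows "\<forall>j\<in>{..<k}. [u ! j = int (j + 1)] (mod int p)"
proof
  fix j assume j: "j \<in> {..<k}"
  have "length u = k"
    using arg_cong[OF proj_u, of length] by (simp add: proj_def)
  then have "u ! j mod int p = int (j + 1)"
    using arg_cong[OF proj_u, of "\<lambda>v. v ! j"] j by (simp add: proj_def nth_upt del: upt_Suc)
  then show "[u ! j = int (j + 1)] (mod int p)"
    using j assms(2) by (simp add: cong_def)
qed

lemma proper_if_dvd_mixed: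
  fixes k p :: nat and u :: "int list"
  assumes q: "prime (k + 1)" "odd (k + 1)" and "k * (k + 1) < p"
    and cong: "\<forall>j\<in>{..<k}. [u ! j = int (j + 1)] (mod int p)"
    and "j0 < k" "int (k + 1) dvd u ! j0" "j1 < k" "\<not> int (k + 1) dvd u ! j1"
  shows "proper k p (k + 1) u"
proof -
  have p0: "0 < p" using assms(3) by (cases p) auto
  have small: "\<forall>j\<in>{..<k}. 0 \<le> int (j + 1) \<and> int (k + 1) * int (j + 1) \<le> int p"
  proof
    fix j assume "j \<in> {..<k}"
    then have "(k + 1) * (j + 1) \<le> (k + 1) * k" by (intro mult_left_mono) auto
    also have "\<dots> < p" using assms(3) by (simp add: mult.commute)
    finally show "0 \<le> int (j + 1) \<and> int (k + 1) * int (j + 1) \<le> int p"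
      by (metis of_nat_0_le_iff of_nat_mult of_nat_le_iff less_imp_le)
  qed
  have "\<exists>s c. \<forall>y\<in>{1..<k + 1}. (s * u ! (y - 1) + c * int y) mod int (k + 1) \<notin> {0, int (k + 1) - 1}"
    by (rule exists_avoiding_linear_form[OF q, of "j0 + 1" _ "j1 + 1"]) (use assms(5-8) in simp_all)
  then obtain s c
    where sc: "\<forall>y\<in>{1..<k + 1}. (s * u ! (y - 1) + c * int y) mod int (k + 1) \<notin> {0, int (k + 1) - 1}"
    by blast
  have form: "\<forall>j\<in>{..<k}. (s * u ! j + c * int (j + 1)) mod int (k + 1) \<notin> {0, int (k + 1) - 1}"
  proof
    fix j assume "j \<in> {..<k}"
    then show "(s * u ! j + c * int (j + 1)) mod int (k + 1) \<notin> {0, int (k + 1) - 1}"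
      using sc[rule_format, of "j + 1"] by simp
  qed
  have "1 < int (k + 1)" "0 < int p"
    using assms(5) p0 by simp_all
  from exists_multiplier_mod_bounds[OF this cong small form]
  obtain m where bounds: "\<forall>j\<in>{..<k}. int p \<le> (m * u ! j) mod (int (k + 1) * int p)
      \<and> (m * u ! j) mod (int (k + 1) * int p) \<le> int (k + 1) * int p - int p"
    by blast
  show ?thesis
    by (rule proper_if_mod_bounds[where m = m, OF p0 _ order_refl]) (use bounds in simp_all)
qed

lemma proper_if_proj_eq_upt:
  fixes k p :: nat and u :: "int list"
  assumes "0 < k" "prime (k + 1)" "odd (k + 1)" "k * (k + 1) < p"
    and proj_u: "proj p u = map int [1..<k + 1]"
  shows "proper k p (k + 1) u"
proof -
  have "k \<le> k * (k + 1)" by simp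
  then have kp: "k < p" using assms(4) by linarith
  then have p0: "0 < p" by simp
  consider (none) "\<forall>j<k. \<not> int (k + 1) dvd u ! j" | (all) "\<forall>j<k. int (k + 1) dvd u ! j"
    | (mixed) j0 j1 where "j0 < k" "int (k + 1) dvd u ! j0" "j1 < k" "\<not> int (k + 1) dvd u ! j1"
    by blast
  then show ?thesis
  proof cases
    case none
    have "0 < int p" "0 < int (k + 1)"
      using p0 by simp_all
    then have bounds: "\<forall>j<k. int p \<le> (int p * u ! j) mod (int (k + 1) * int p)
        \<and> (int p * u ! j) mod (int (k + 1) * int p) \<le> int (k + 1) * int p - int p"
      using none mult_mod_bounds_if_not_dvd by blast
    show ?thesis
      by (rule proper_if_mod_bounds[OF p0 _ order_refl bounds]) simp
  next
    case all
    then show ?thesis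
      using assms(1) by (intro proper_if_all_dvd) auto
  next
    case mixed
    then show ?thesis
      using proper_if_dvd_mixed[OF assms(2-4) nth_cong_if_proj_eq_upt[OF proj_u kp]] by blast
  qed
qed

theorem proposition4p4:
  fixes k p :: nat
  assumes "k > 0" and "prime (k + 1)" and "odd (k + 1)"
    and "prime p" and "odd p" and "p > k * (k + 1)"
  shows "(\<forall>u \<in> tuples k p (k + 1). proj p u = map int [1..<k + 1] \<longrightarrow> proper k p (k + 1) u)
         \<and> eventually_proper k p (map int [1..<k + 1])"
proof (intro conjI ballI impI)
  show "proper k p (k + 1) u" if "proj p u = map int [1..<k + 1]" for u
    using proper_if_proj_eq_upt[OF assms(1-3,6) that] .
  have "k \<le> k * (k + 1)"
    by simp
  then have "k < p"
    using assms(6) by linarith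
  then have "map int [1..<k + 1] \<in> tuples k p 1"
    by (auto simp: tuples_def Zpl_def nat_dvd_not_less)
  moreover have "map int [1..<k + 1] \<notin> proj p ` improper_set k p (k + 1)"
  proof
    assume "map int [1..<k + 1] \<in> proj p ` improper_set k p (k + 1)"
    then obtain u where "proj p u = map int [1..<k + 1]" "\<not> proper k p (k + 1) u"
      unfolding improper_set_def by (elim imageE) (simp add: eq_commute)
    then show False
      using proper_if_proj_eq_upt[OF assms(1-3,6)] by blast
  qed
  moreover have "0 < k + 1"
    by simp
  ultimately show "eventually_proper k p (map int [1..<k + 1])"
    unfolding eventually_proper_def by (intro conjI exI[of _ "k + 1"]) assumption+
qed

end
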